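(* Let $(A,\cdot,[\,,\,],\varepsilon)$ be an $F$-manifold color algebra, let $V$ be a $G$-graded vector space, let $\rho:A\to\mathfrak{gl}(V)$ be a representation of the Lie color algebra $(A,[\,,\,],\varepsilon)$ and let $\mu:A\to\mathfrak{gl}(V)$ be a representation of the $\varepsilon$-commutative associative algebra $(A,\cdot,\varepsilon)$ such that for all homogeneous $x,y,z\in A$: $$R_{\rho,\mu}(x\cdot y,z)=\varepsilon(x,y+z)R_{\rho,\mu}(y,z)\mu(x)+\varepsilon(y,z)R_{\rho,\mu}(x,z)\mu(y),$$ $$\mu(P_x(y,z))=-\varepsilon(x,y+z)T_{\rho,\mu}(y,z)\mu(x)+\mu(x)T_{\rho,\mu}(y,z),$$ where $R_{\rho,\mu}(x,y)=\rho(x)\mu(y)-\varepsilon(x,y)\mu(y)\rho(x)-\mu([x,y])$ and $T_{\rho,\mu}(x,y)=-\varepsilon(x,y)\rho(y)\mu(x)-\rho(x)\mu(y)+\rho(x\cdot y)$. Then $(V^*,\rho^*,-\mu^* )$ is a representation of the $F$-manifold color algebra $A$.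
   Context: $G$ is an abelian group and $\varepsilon:G\times G\to\mathbb K\setminus\{0\}$ is a skew-symmetric bicharacter: $\varepsilon(a,b)\varepsilon(b,a)=1$, $\varepsilon(a,b+c)=\varepsilon(a,b)\varepsilon(a,c)$, $\varepsilon(a+b,c)=\varepsilon(a,c)\varepsilon(b,c)$; $\mathbb K$ is algebraically closed of characteristic zero, spaces finite-dimensional. For homogeneous $x\in A_a,y\in A_b$, $\varepsilon(x,y)$ means $\varepsilon(a,b)$, $\varepsilon(x,y+z)$ means $\varepsilon(a,b+c)$, etc. An $\varepsilon$-commutative associative algebra is a $G$-graded associative algebra $(A,\cdot)$ with $A_aA_b\subseteq A_{a+b}$ and $x\cdot y=\varepsilon(x,y)y\cdot x$. A Lie color algebra is a $G$-graded space with bilinear $[\,,\,]$, $[A_a,A_b]\subseteq A_{a+b}$, $[x,y]=-\varepsilon(x,y)[y,x]$, and $\varepsilon(z,x)[x,[y,z]]+\varepsilon(y,z)[z,[x,y]]+\varepsilon(x,y)[y,[z,x]]=0$. An $F$-manifold color algebra is $(A,\cdot,[\,,\,],\varepsilon)$ with $(A,\cdot,\varepsilon)$ an $\varepsilon$-commutative associative algebra and $(A,[\,,\,],\varepsilon)$ a Lie color algebra such that $P_{x\cdot y}(z,w)=x\cdot P_y(z,w)+\varepsilon(x,y)y\cdot P_x(z,w)$ for homogeneous $x,y,z,w$, where $P_x(y,z)=[x,y\cdot z]-[x,y]\cdot z-\varepsilon(x,y)y\cdot[x,z]$. Representations: $\mu:A\to\mathfrak{gl}(V)$ with $\mu(x)V_a\subseteq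 V_{a+b}$ for $x\in A_b$ and $\mu(x\cdot y)=\mu(x)\mu(y)$ (for the associative algebra); $\rho:A\to\mathfrak{gl}(V)$ with the same degree condition and $\rho([x,y])=\rho(x)\rho(y)-\varepsilon(x,y)\rho(y)\rho(x)$ (for the Lie color algebra). A representation of the $F$-manifold color algebra $A$ is a triple $(W,\rho',\mu')$ with $\rho'$ a Lie color representation and $\mu'$ an associative representation on the graded space $W$ such that for homogeneous $x_1,x_2,x_3$: $R_{\rho',\mu'}(x_1\cdot x_2,x_3)=\mu'(x_1)R_{\rho',\mu'}(x_2,x_3)+\varepsilon(x_1,x_2)\mu'(x_2)R_{\rho',\mu'}(x_1,x_3)$ and $\mu'(P_{x_1}(x_2,x_3))=\varepsilon(x_1,x_2+x_3)S_{\rho',\mu'}(x_2,x_3)\mu'(x_1)-\mu'(x_1)S_{\rho',\mu'}(x_2,x_3)$, with $R_{\rho',\mu'}(x_1,x_2)=\rho'(x_1)\mu'(x_2)-\varepsilon(x_1,x_2)\mu'(x_2)\rho'(x_1)-\mu'([x_1,x_2])$ and $S_{\rho',\mu'}(x_1,x_2)=\mu'(x_1)\rho'(x_2)+\varepsilon(x_1,x_2)\mu'(x_2)\rho'(x_1)-\rho'(x_1\cdot x_2)$. The dual $V^*$ is $G$-graded by $V^*_a=\{\alpha\in V^*:\alpha(V_b)=0\text{ for all }b\neq -a\}$. For a linear map $\phi:A\to\mathfrak{gl}(V)$ (with $\phi(x)V_b\subseteq V_{a+b}$ for $x\in A_a$), $\phi^*:A\to\mathfrak{gl}(V^* )$ is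 defined by $\phi^*(x)\alpha\in V^*_{a+c}$ and $\langle\phi^*(x)\alpha,v\rangle=-\varepsilon(x,\alpha)\langle\alpha,\phi(x)v\rangle$ for $x\in A_a$, $v\in V_b$, $\alpha\in V^*_c$; this defines $\rho^*$ and $\mu^*$. *)

theory Defs
  imports Main "HOL-Library.Function_Algebras" "HOL-Computational_Algebra.Polynomial"
begin

definition alg_closed_field :: "'k::field itself \<Rightarrow> bool" where
  "alg_closed_field _ \<longleftrightarrow> (\<forall>p::'k poly. degree p \<ge> 1 \<longrightarrow> (\<exists>z. poly p z = 0))"

definition skew_bichar :: "('g::ab_group_add \<Rightarrow> 'g \<Rightarrow> 'k::field) \<Rightarrow> bool" where
  "skew_bichar eps \<longleftrightarrow>
     (\<forall>a b. eps a b \<noteq> 0) \<and>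
     (\<forall>a b. eps a b * eps b a = 1) \<and>
     (\<forall>a b c. eps a (b + c) = eps a b * eps a c) \<and>
     (\<forall>a b c. eps (a + b) c = eps a c * eps b c)"

definition hdec :: "('g \<Rightarrow> 'w::comm_monoid_add set) \<Rightarrow> 'w \<Rightarrow> ('g \<Rightarrow> 'w) \<Rightarrow> bool" where
  "hdec Wg w f \<longleftrightarrow> finite {g. f g \<noteq> 0} \<and> (\<forall>g. f g \<in> Wg g) \<and> w = (\<Sum>g\<in>{g. f g \<noteq> 0}. f g)"

text \<open>W is the direct sum of the subspaces Wg g.\<close>
definition graded_space ::
  "('k::field \<Rightarrow> 'w::ab_group_add \<Rightarrow> 'w) \<Rightarrow> 'w set \<Rightarrow> ('g \<Rightarrow> 'w set) \<Rightarrow> bool" where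
  "graded_space sc W Wg \<longleftrightarrow>
     (\<forall>g. Wg g \<subseteq> W \<and> 0 \<in> Wg g \<and> (\<forall>u\<in>Wg g. \<forall>v\<in>Wg g. u + v \<in> Wg g) \<and>
          (\<forall>c. \<forall>u\<in>Wg g. sc c u \<in> Wg g)) \<and>
     (\<forall>w. w \<in> W \<longleftrightarrow> (\<exists>f. hdec Wg w f)) \<and>
     (\<forall>w\<in>W. \<exists>!f. hdec Wg w f)"

definition gcomp :: "('g \<Rightarrow> 'w::comm_monoid_add set) \<Rightarrow> 'w \<Rightarrow> 'g \<Rightarrow> 'w" where
  "gcomp Wg w = (THE f. hdec Wg w f)"

definition fin_dim :: "('k::field \<Rightarrow> 'w::ab_group_add \<Rightarrow> 'w) \<Rightarrow> bool" where
  "fin_dim sc \<longleftrightarrow> (\<exists>B. finite B \<and> module.span sc B = UNIV)"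

definition bilinear_op :: "('k::field \<Rightarrow> 'a::ab_group_add \<Rightarrow> 'a) \<Rightarrow> ('a \<Rightarrow> 'a \<Rightarrow> 'a) \<Rightarrow> bool" where
  "bilinear_op scA m \<longleftrightarrow>
     (\<forall>x y z. m (x + y) z = m x z + m y z) \<and> (\<forall>x y z. m x (y + z) = m x y + m x z) \<and>
     (\<forall>c x y. m (scA c x) y = scA c (m x y)) \<and> (\<forall>c x y. m x (scA c y) = scA c (m x y))"

definition graded_op :: "('g::ab_group_add \<Rightarrow> 'a set) \<Rightarrow> ('a \<Rightarrow> 'a \<Rightarrow> 'a) \<Rightarrow> bool" where
  "graded_op Ag m \<longleftrightarrow> (\<forall>a b x y. x \<in> Ag a \<longrightarrow> y \<in> Ag b \<longrightarrow> m x y \<in> Ag (a + b))"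

definition eps_comm_assoc ::
  "('g::ab_group_add \<Rightarrow> 'g \<Rightarrow> 'k::field) \<Rightarrow> ('k \<Rightarrow> 'a::ab_group_add \<Rightarrow> 'a) \<Rightarrow> ('g \<Rightarrow> 'a set)
   \<Rightarrow> ('a \<Rightarrow> 'a \<Rightarrow> 'a) \<Rightarrow> bool" where
  "eps_comm_assoc eps scA Ag mul \<longleftrightarrow>
     bilinear_op scA mul \<and> graded_op Ag mul \<and>
     (\<forall>x y z. mul x (mul y z) = mul (mul x y) z) \<and>
     (\<forall>a b x y. x \<in> Ag a \<longrightarrow> y \<in> Ag b \<longrightarrow> mul x y = scA (eps a b) (mul y x))"

definition lie_color ::
  "('g::ab_group_add \<Rightarrow> 'g \<Rightarrow> 'k::field) \<Rightarrow> ('k \<Rightarrow> 'a::ab_group_add \<Rightarrow> 'a) \<Rightarrow> ('g \<Rightarrow> 'a set)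
   \<Rightarrow> ('a \<Rightarrow> 'a \<Rightarrow> 'a) \<Rightarrow> bool" where
  "lie_color eps scA Ag br \<longleftrightarrow>
     bilinear_op scA br \<and> graded_op Ag br \<and>
     (\<forall>a b x y. x \<in> Ag a \<longrightarrow> y \<in> Ag b \<longrightarrow> br x y = - scA (eps a b) (br y x)) \<and>
     (\<forall>a b c x y z. x \<in> Ag a \<longrightarrow> y \<in> Ag b \<longrightarrow> z \<in> Ag c \<longrightarrow>
        scA (eps c a) (br x (br y z)) + scA (eps b c) (br z (br x y)) + scA (eps a b) (br y (br z x)) = 0)"

text \<open>P_x(y,z) for x of degree a and y of degree b.\<close>
definition Pop ::
  "('g \<Rightarrow> 'g \<Rightarrow> 'k::field) \<Rightarrow> ('k \<Rightarrow> 'a::ab_group_add \<Rightarrow> 'a) \<Rightarrow> ('a \<Rightarrow> 'a \<Rightarrow> 'a) \<Rightarrow> ('a \<Rightarrow> 'a \<Rightarrow> 'a)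
   \<Rightarrow> 'g \<Rightarrow> 'g \<Rightarrow> 'a \<Rightarrow> 'a \<Rightarrow> 'a \<Rightarrow> 'a" where
  "Pop eps scA mul br a b x y z = br x (mul y z) - mul (br x y) z - scA (eps a b) (mul y (br x z))"

definition F_manifold_color ::
  "('g::ab_group_add \<Rightarrow> 'g \<Rightarrow> 'k::field) \<Rightarrow> ('k \<Rightarrow> 'a::ab_group_add \<Rightarrow> 'a) \<Rightarrow> ('g \<Rightarrow> 'a set)
   \<Rightarrow> ('a \<Rightarrow> 'a \<Rightarrow> 'a) \<Rightarrow> ('a \<Rightarrow> 'a \<Rightarrow> 'a) \<Rightarrow> bool" where
  "F_manifold_color eps scA Ag mul br \<longleftrightarrow>
     eps_comm_assoc eps scA Ag mul \<and> lie_color eps scA Ag br \<and>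
     (\<forall>a b c d x y z w. x \<in> Ag a \<longrightarrow> y \<in> Ag b \<longrightarrow> z \<in> Ag c \<longrightarrow> w \<in> Ag d \<longrightarrow>
        Pop eps scA mul br (a + b) c (mul x y) z w
        = mul x (Pop eps scA mul br b c y z w) + scA (eps a b) (mul y (Pop eps scA mul br a c x z w)))"

definition op_family ::
  "('k::field \<Rightarrow> 'a::ab_group_add \<Rightarrow> 'a) \<Rightarrow> ('g::ab_group_add \<Rightarrow> 'a set) \<Rightarrow>
   ('k \<Rightarrow> 'w::ab_group_add \<Rightarrow> 'w) \<Rightarrow> 'w set \<Rightarrow> ('g \<Rightarrow> 'w set) \<Rightarrow> ('a \<Rightarrow> 'w \<Rightarrow> 'w) \<Rightarrow> bool" where
  "op_family scA Ag scW W Wg phi \<longleftrightarrow>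
     (\<forall>x. \<forall>w\<in>W. phi x w \<in> W) \<and>
     (\<forall>x. \<forall>u\<in>W. \<forall>v\<in>W. phi x (u + v) = phi x u + phi x v) \<and>
     (\<forall>x c. \<forall>u\<in>W. phi x (scW c u) = scW c (phi x u)) \<and>
     (\<forall>x y. \<forall>w\<in>W. phi (x + y) w = phi x w + phi y w) \<and>
     (\<forall>c x. \<forall>w\<in>W. phi (scA c x) w = scW c (phi x w)) \<and>
     (\<forall>a b x w. x \<in> Ag b \<longrightarrow> w \<in> Wg a \<longrightarrow> phi x w \<in> Wg (a + b))"

definition lie_rep ::
  "('g::ab_group_add \<Rightarrow> 'g \<Rightarrow> 'k::field) \<Rightarrow> ('k \<Rightarrow> 'a::ab_group_add \<Rightarrow> 'a) \<Rightarrow> ('g \<Rightarrow> 'a set) \<Rightarrow>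
   ('a \<Rightarrow> 'a \<Rightarrow> 'a) \<Rightarrow> ('k \<Rightarrow> 'w::ab_group_add \<Rightarrow> 'w) \<Rightarrow> 'w set \<Rightarrow> ('g \<Rightarrow> 'w set) \<Rightarrow>
   ('a \<Rightarrow> 'w \<Rightarrow> 'w) \<Rightarrow> bool" where
  "lie_rep eps scA Ag br scW W Wg rho \<longleftrightarrow>
     op_family scA Ag scW W Wg rho \<and>
     (\<forall>a b x y. x \<in> Ag a \<longrightarrow> y \<in> Ag b \<longrightarrow>
        (\<forall>w\<in>W. rho (br x y) w = rho x (rho y w) - scW (eps a b) (rho y (rho x w))))"

definition assoc_rep ::
  "('k::field \<Rightarrow> 'a::ab_group_add \<Rightarrow> 'a) \<Rightarrow> ('g::ab_group_add \<Rightarrow> 'a set) \<Rightarrow>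
   ('a \<Rightarrow> 'a \<Rightarrow> 'a) \<Rightarrow> ('k \<Rightarrow> 'w::ab_group_add \<Rightarrow> 'w) \<Rightarrow> 'w set \<Rightarrow> ('g \<Rightarrow> 'w set) \<Rightarrow>
   ('a \<Rightarrow> 'w \<Rightarrow> 'w) \<Rightarrow> bool" where
  "assoc_rep scA Ag mul scW W Wg mu \<longleftrightarrow>
     op_family scA Ag scW W Wg mu \<and>
     (\<forall>x y. \<forall>w\<in>W. mu (mul x y) w = mu x (mu y w))"

text \<open>R_{rho,mu}(x,y), x of degree a, y of degree b, applied to w.\<close>
definition Rop ::
  "('g \<Rightarrow> 'g \<Rightarrow> 'k::field) \<Rightarrow> ('a \<Rightarrow> 'a \<Rightarrow> 'a) \<Rightarrow> ('k \<Rightarrow> 'w::ab_group_add \<Rightarrow> 'w) \<Rightarrow>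
   ('a \<Rightarrow> 'w \<Rightarrow> 'w) \<Rightarrow> ('a \<Rightarrow> 'w \<Rightarrow> 'w) \<Rightarrow> 'g \<Rightarrow> 'g \<Rightarrow> 'a \<Rightarrow> 'a \<Rightarrow> 'w \<Rightarrow> 'w" where
  "Rop eps br scW rho mu a b x y w =
     rho x (mu y w) - scW (eps a b) (mu y (rho x w)) - mu (br x y) w"

definition Sop ::
  "('g \<Rightarrow> 'g \<Rightarrow> 'k::field) \<Rightarrow> ('a \<Rightarrow> 'a \<Rightarrow> 'a) \<Rightarrow> ('k \<Rightarrow> 'w::ab_group_add \<Rightarrow> 'w) \<Rightarrow>
   ('a \<Rightarrow> 'w \<Rightarrow> 'w) \<Rightarrow> ('a \<Rightarrow> 'w \<Rightarrow> 'w) \<Rightarrow> 'g \<Rightarrow> 'g \<Rightarrow> 'a \<Rightarrow> 'a \<Rightarrow> 'w \<Rightarrow> 'w" where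
  "Sop eps mul scW rho mu a b x y w =
     mu x (rho y w) + scW (eps a b) (mu y (rho x w)) - rho (mul x y) w"

definition Top ::
  "('g \<Rightarrow> 'g \<Rightarrow> 'k::field) \<Rightarrow> ('a \<Rightarrow> 'a \<Rightarrow> 'a) \<Rightarrow> ('k \<Rightarrow> 'w::ab_group_add \<Rightarrow> 'w) \<Rightarrow>
   ('a \<Rightarrow> 'w \<Rightarrow> 'w) \<Rightarrow> ('a \<Rightarrow> 'w \<Rightarrow> 'w) \<Rightarrow> 'g \<Rightarrow> 'g \<Rightarrow> 'a \<Rightarrow> 'a \<Rightarrow> 'w \<Rightarrow> 'w" where
  "Top eps mul scW rho mu a b x y w =
     - scW (eps a b) (rho y (mu x w)) - rho x (mu y w) + rho (mul x y) w"

definition F_manifold_rep ::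
  "('g::ab_group_add \<Rightarrow> 'g \<Rightarrow> 'k::field) \<Rightarrow> ('k \<Rightarrow> 'a::ab_group_add \<Rightarrow> 'a) \<Rightarrow> ('g \<Rightarrow> 'a set) \<Rightarrow>
   ('a \<Rightarrow> 'a \<Rightarrow> 'a) \<Rightarrow> ('a \<Rightarrow> 'a \<Rightarrow> 'a) \<Rightarrow>
   ('k \<Rightarrow> 'w::ab_group_add \<Rightarrow> 'w) \<Rightarrow> 'w set \<Rightarrow> ('g \<Rightarrow> 'w set) \<Rightarrow>
   ('a \<Rightarrow> 'w \<Rightarrow> 'w) \<Rightarrow> ('a \<Rightarrow> 'w \<Rightarrow> 'w) \<Rightarrow> bool" where
  "F_manifold_rep eps scA Ag mul br scW W Wg rho mu \<longleftrightarrow>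
     lie_rep eps scA Ag br scW W Wg rho \<and> assoc_rep scA Ag mul scW W Wg mu \<and>
     (\<forall>a1 a2 a3 x1 x2 x3. x1 \<in> Ag a1 \<longrightarrow> x2 \<in> Ag a2 \<longrightarrow> x3 \<in> Ag a3 \<longrightarrow> (\<forall>w\<in>W.
        Rop eps br scW rho mu (a1 + a2) a3 (mul x1 x2) x3 w
        = mu x1 (Rop eps br scW rho mu a2 a3 x2 x3 w)
          + scW (eps a1 a2) (mu x2 (Rop eps br scW rho mu a1 a3 x1 x3 w)))) \<and>
     (\<forall>a1 a2 a3 x1 x2 x3. x1 \<in> Ag a1 \<longrightarrow> x2 \<in> Ag a2 \<longrightarrow> x3 \<in> Ag a3 \<longrightarrow> (\<forall>w\<in>W.
        mu (Pop eps scA mul br a1 a2 x1 x2 x3) w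
        = scW (eps a1 (a2 + a3)) (Sop eps mul scW rho mu a2 a3 x2 x3 (mu x1 w))
          - mu x1 (Sop eps mul scW rho mu a2 a3 x2 x3 w)))"

definition dual_scale :: "'k::field \<Rightarrow> ('v \<Rightarrow> 'k) \<Rightarrow> ('v \<Rightarrow> 'k)" where
  "dual_scale c \<alpha> = (\<lambda>v. c * \<alpha> v)"

definition dual_carrier :: "('k::field \<Rightarrow> 'v::ab_group_add \<Rightarrow> 'v) \<Rightarrow> ('v \<Rightarrow> 'k) set" where
  "dual_carrier scV = {\<alpha>. (\<forall>u v. \<alpha> (u + v) = \<alpha> u + \<alpha> v) \<and> (\<forall>c u. \<alpha> (scV c u) = c * \<alpha> u)}"

definition dual_grading ::
  "('k::field \<Rightarrow> 'v::ab_group_add \<Rightarrow> 'v) \<Rightarrow> ('g::ab_group_add \<Rightarrow> 'v set) \<Rightarrow> 'g \<Rightarrow> ('v \<Rightarrow> 'k) set" where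
  "dual_grading scV Vg a = {\<alpha> \<in> dual_carrier scV. \<forall>b. b \<noteq> - a \<longrightarrow> (\<forall>v\<in>Vg b. \<alpha> v = 0)}"

text \<open>phi^*: for homogeneous x (degree a) and alpha (degree c),
  phi^*(x) alpha = (v \<mapsto> - eps a c * alpha (phi x v)); extended bilinearly via homogeneous components.\<close>
definition dual_op ::
  "('g::ab_group_add \<Rightarrow> 'g \<Rightarrow> 'k::field) \<Rightarrow> ('g \<Rightarrow> 'a::comm_monoid_add set) \<Rightarrow>
   ('k \<Rightarrow> 'v::ab_group_add \<Rightarrow> 'v) \<Rightarrow> ('g \<Rightarrow> 'v set) \<Rightarrow> ('a \<Rightarrow> 'v \<Rightarrow> 'v) \<Rightarrow>
   'a \<Rightarrow> ('v \<Rightarrow> 'k) \<Rightarrow> ('v \<Rightarrow> 'k)" where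
  "dual_op eps Ag scV Vg phi x \<alpha> =
     (\<lambda>v. - (\<Sum>a\<in>{a. gcomp Ag x a \<noteq> 0}. \<Sum>c\<in>{c. gcomp (dual_grading scV Vg) \<alpha> c \<noteq> 0}.
              eps a c * gcomp (dual_grading scV Vg) \<alpha> c (phi (gcomp Ag x a) v)))"

definition neg_op :: "('a \<Rightarrow> 'w \<Rightarrow> 'w::group_add) \<Rightarrow> 'a \<Rightarrow> 'w \<Rightarrow> 'w" where
  "neg_op phi x w = - phi x w"

end

theory Submission
  imports Defs
begin

text \<open>
  For x homogeneous of degree a and a functional \<alpha> of degree d, the definition of the dual
  operators gives \<open>\<rho>\<^sup>*(x)\<alpha> = - \<epsilon>(a,d) \<alpha> \<circ> \<rho>(x)\<close> and \<open>(-\<mu>\<^sup>*)(x)\<alpha> = \<epsilon>(a,d) \<alpha> \<circ> \<mu>(x)\<close>.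
  Composing twice reverses the order of the operators, and with the bicharacter identities one
  finds \<open>R\<^bsub>\<rho>\<^sup>*,-\<mu>\<^sup>*\<^esub>(x,y)\<alpha> = \<epsilon>(a+b,d) \<alpha> \<circ> R\<^bsub>\<rho>,\<mu>\<^esub>(x,y)\<close> and
  \<open>S\<^bsub>\<rho>\<^sup>*,-\<mu>\<^sup>*\<^esub>(x,y)\<alpha> = \<epsilon>(a+b,d) \<alpha> \<circ> T\<^bsub>\<rho>,\<mu>\<^esub>(x,y)\<close>. Hence the two compatibility conditions
  required of \<open>(V\<^sup>*,\<rho>\<^sup>*,-\<mu>\<^sup>*)\<close> are the transposes of the two hypotheses, just as the representation
  identities of \<open>\<rho>\<^sup>*\<close> and \<open>-\<mu>\<^sup>*\<close> are the transposes of those of \<open>\<rho>\<close> and \<open>\<mu>\<close>. All identities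
  are additive in every argument, so it suffices to check them on homogeneous elements; finite
  dimensionality of V makes \<open>V\<^sup>*\<close> the direct sum of the \<open>V\<^sup>*\<^sub>d\<close>.
\<close>

section \<open>Graded spaces\<close>

definition grade_support :: "('g \<Rightarrow> 'w::comm_monoid_add set) \<Rightarrow> 'w \<Rightarrow> 'g set" where
  "grade_support Wg w = {g. gcomp Wg w g \<noteq> 0}"

lemma hdec_sum_superset:
  assumes "hdec Wg w f" "finite S" "{g. f g \<noteq> 0} \<subseteq> S"
  shows "w = (\<Sum>g\<in>S. f g)"
proof -
  have "w = (\<Sum>g\<in>{g. f g \<noteq> 0}. f g)" using assms(1) by (simp add: hdec_def)
  also have "\<dots> = (\<Sum>g\<in>S. f g)"
    by (rule sum.mono_neutral_left) (use assms in auto)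
  finally show ?thesis .
qed

context
  fixes sc :: "'k::field \<Rightarrow> 'w::ab_group_add \<Rightarrow> 'w" and W :: "'w set" and Wg :: "'g \<Rightarrow> 'w set"
  assumes graded: "graded_space sc W Wg"
begin

lemma graded_space_mem_if_hdec: "hdec Wg w f \<Longrightarrow> w \<in> W"
  using graded unfolding graded_space_def by blast

lemma graded_space_component_zero: "0 \<in> Wg g"
  using graded unfolding graded_space_def by blast

lemma graded_space_component_add: "u \<in> Wg g \<Longrightarrow> v \<in> Wg g \<Longrightarrow> u + v \<in> Wg g"
  using graded unfolding graded_space_def by blast

lemma graded_space_component_scale: "u \<in> Wg g \<Longrightarrow> sc c u \<in> Wg g"
  using graded unfolding graded_space_def by blast

lemma graded_space_component_diff:
  assumes "vector_space sc" and "u \<in> Wg g" "v \<in> Wg g"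
  shows "u - v \<in> Wg g"
proof -
  interpret vector_space sc by fact
  have "u - v = u + sc (-1) v" by simp
  then show ?thesis
    using assms graded_space_component_add graded_space_component_scale by metis
qed

lemma graded_space_component_subset: "u \<in> Wg g \<Longrightarrow> u \<in> W"
  using graded unfolding graded_space_def by blast

lemma gcomp_eqI: "hdec Wg w f \<Longrightarrow> gcomp Wg w = f"
  unfolding gcomp_def
  by (rule the1_equality) (use graded graded_space_mem_if_hdec in \<open>auto simp: graded_space_def\<close>)

lemma hdec_gcomp: "w \<in> W \<Longrightarrow> hdec Wg w (gcomp Wg w)"
  using graded unfolding gcomp_def graded_space_def by (metis theI')

lemma gcomp_mem: "w \<in> W \<Longrightarrow> gcomp Wg w g \<in> Wg g"
  using hdec_gcomp unfolding hdec_def by blast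

lemma finite_grade_support: "w \<in> W \<Longrightarrow> finite (grade_support Wg w)"
  using hdec_gcomp unfolding hdec_def grade_support_def by blast

lemma gcomp_sum_superset:
  "w \<in> W \<Longrightarrow> finite S \<Longrightarrow> grade_support Wg w \<subseteq> S \<Longrightarrow> w = (\<Sum>g\<in>S. gcomp Wg w g)"
  unfolding grade_support_def by (rule hdec_sum_superset[OF hdec_gcomp])

lemma gcomp_homogeneous: "x \<in> Wg a \<Longrightarrow> gcomp Wg x = (\<lambda>g. if g = a then x else 0)"
  by (rule gcomp_eqI)
    (auto simp: hdec_def graded_space_component_zero if_distrib[of "\<lambda>y. y \<noteq> 0"] cong: if_cong)

lemma grade_support_homogeneous: "x \<in> Wg a \<Longrightarrow> grade_support Wg x \<subseteq> {a}"
  by (auto simp: grade_support_def gcomp_homogeneous)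

lemma hdec_zero: "hdec Wg 0 (\<lambda>_. 0)"
  unfolding hdec_def using graded_space_component_zero by simp

lemma hdec_add:
  assumes hx: "hdec Wg x f" and hy: "hdec Wg y h"
  shows "hdec Wg (x + y) (\<lambda>g. f g + h g)"
proof -
  let ?S = "{g. f g \<noteq> 0} \<union> {g. h g \<noteq> 0}"
  have fS: "finite ?S" using hx hy by (simp add: hdec_def)
  have sub: "{g. f g + h g \<noteq> 0} \<subseteq> ?S" by auto
  have "x + y = (\<Sum>g\<in>?S. f g) + (\<Sum>g\<in>?S. h g)"
    using hdec_sum_superset[OF hx fS] hdec_sum_superset[OF hy fS] by auto
  also have "\<dots> = (\<Sum>g\<in>{g. f g + h g \<noteq> 0}. f g + h g)"
    unfolding sum.distrib[symmetric] by (rule sum.mono_neutral_right) (use fS sub in auto)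
  finally show ?thesis
    using finite_subset[OF sub fS] graded_space_component_add hx hy by (auto simp: hdec_def)
qed

lemma hdec_scale:
  assumes vs: "vector_space sc" and hx: "hdec Wg x f"
  shows "hdec Wg (sc c x) (\<lambda>g. sc c (f g))"
proof -
  interpret vector_space sc by (fact vs)
  let ?S = "{g. f g \<noteq> 0}"
  have fS: "finite ?S" using hx by (simp add: hdec_def)
  have sub: "{g. sc c (f g) \<noteq> 0} \<subseteq> ?S" by auto
  have "sc c x = (\<Sum>g\<in>?S. sc c (f g))"
    using hdec_sum_superset[OF hx fS] by (simp add: scale_sum_right)
  also have "\<dots> = (\<Sum>g\<in>{g. sc c (f g) \<noteq> 0}. sc c (f g))"
    by (rule sum.mono_neutral_right) (use fS sub in auto)
  finally show ?thesis
    using finite_subset[OF sub fS] graded_space_component_scale hx by (auto simp: hdec_def)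
qed

lemma graded_space_zero_mem: "0 \<in> W"
  by (rule graded_space_mem_if_hdec[OF hdec_zero])

lemma graded_space_add_mem: "x \<in> W \<Longrightarrow> y \<in> W \<Longrightarrow> x + y \<in> W"
  by (rule graded_space_mem_if_hdec[OF hdec_add[OF hdec_gcomp hdec_gcomp]])

lemma graded_space_scale_mem: "vector_space sc \<Longrightarrow> x \<in> W \<Longrightarrow> sc c x \<in> W"
  by (rule graded_space_mem_if_hdec[OF hdec_scale[OF _ hdec_gcomp]])

lemma gcomp_zero: "gcomp Wg 0 = (\<lambda>_. 0)"
  by (rule gcomp_eqI[OF hdec_zero])

lemma gcomp_add: "x \<in> W \<Longrightarrow> y \<in> W \<Longrightarrow> gcomp Wg (x + y) = (\<lambda>g. gcomp Wg x g + gcomp Wg y g)"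
  by (rule gcomp_eqI[OF hdec_add[OF hdec_gcomp hdec_gcomp]])

lemma gcomp_scale: "vector_space sc \<Longrightarrow> x \<in> W \<Longrightarrow> gcomp Wg (sc c x) = (\<lambda>g. sc c (gcomp Wg x g))"
  by (rule gcomp_eqI[OF hdec_scale[OF _ hdec_gcomp]])

lemma grade_support_add:
  "x \<in> W \<Longrightarrow> y \<in> W \<Longrightarrow> grade_support Wg (x + y) \<subseteq> grade_support Wg x \<union> grade_support Wg y"
  by (auto simp: grade_support_def gcomp_add)

lemma grade_support_scale:
  assumes "vector_space sc" and "x \<in> W"
  shows "grade_support Wg (sc c x) \<subseteq> grade_support Wg x"
proof -
  interpret vector_space sc by fact
  show ?thesis using assms by (auto simp: grade_support_def gcomp_scale)
qed

lemma graded_space_additive_eqI: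
  fixes F G :: "'w \<Rightarrow> 'b::ab_group_add"
  assumes F: "\<And>u v. u \<in> W \<Longrightarrow> v \<in> W \<Longrightarrow> F (u + v) = F u + F v"
    and G: "\<And>u v. u \<in> W \<Longrightarrow> v \<in> W \<Longrightarrow> G (u + v) = G u + G v"
    and homogeneous: "\<And>c u. u \<in> Wg c \<Longrightarrow> F u = G u"
    and w: "w \<in> W"
  shows "F w = G w"
proof -
  have F0: "F 0 = 0" and G0: "G 0 = 0"
    using F[OF graded_space_zero_mem graded_space_zero_mem]
      G[OF graded_space_zero_mem graded_space_zero_mem] by simp_all
  have partial_sums: "(\<Sum>c\<in>T. gcomp Wg w c) \<in> W \<and>
      F (\<Sum>c\<in>T. gcomp Wg w c) = G (\<Sum>c\<in>T. gcomp Wg w c)" if "finite T" for T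
    using that
  proof (induction T rule: finite_induct)
    case empty
    show ?case using graded_space_zero_mem F0 G0 by simp
  next
    case (insert c T)
    have "gcomp Wg w c \<in> W" by (rule graded_space_component_subset[OF gcomp_mem[OF w]])
    then show ?case
      using insert graded_space_add_mem F G homogeneous[OF gcomp_mem[OF w]] by simp
  qed
  show ?thesis
    using partial_sums[OF finite_grade_support[OF w]]
      gcomp_sum_superset[OF w finite_grade_support[OF w] subset_refl] by metis
qed

end

lemma finite_nonzero_degrees:
  assumes graded: "graded_space sc UNIV Wg" and vs: "vector_space sc" and fd: "fin_dim sc"
  shows "finite {g. \<exists>v\<in>Wg g. v \<noteq> 0}"
proof -
  interpret vector_space sc by (fact vs)
  obtain B where "finite B" and span_B: "span B = UNIV" using fd unfolding fin_dim_def by blast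
  let ?D = "\<Union>b\<in>B. grade_support Wg b"
  have "finite ?D" using \<open>finite B\<close> finite_grade_support[OF graded] by blast
  moreover have "g \<in> ?D" if v: "v \<in> Wg g" "v \<noteq> 0" for g v
  proof (rule ccontr)
    assume g: "g \<notin> ?D"
    have "subspace {v. gcomp Wg v g = 0}"
      unfolding subspace_def using gcomp_zero[OF graded] gcomp_add[OF graded] gcomp_scale[OF graded vs]
      by simp
    moreover have "B \<subseteq> {v. gcomp Wg v g = 0}" using g by (auto simp: grade_support_def)
    ultimately have "span B \<subseteq> {v. gcomp Wg v g = 0}" by (rule span_minimal[rotated])
    then have "gcomp Wg v g = 0" using span_B by auto
    then show False using v gcomp_homogeneous[OF graded v(1)] by simp
  qed
  ultimately show ?thesis by (blast intro: finite_subset)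
qed


section \<open>The graded dual\<close>

lemma sum_apply: "(\<Sum>c\<in>T. f c) v = (\<Sum>c\<in>T. f c v)"
  by (induct T rule: infinite_finite_induct) simp_all

context
  fixes \<alpha> :: "'v::ab_group_add \<Rightarrow> 'k::field" and scV :: "'k \<Rightarrow> 'v \<Rightarrow> 'v"
  assumes \<alpha>: "\<alpha> \<in> dual_carrier scV"
begin

lemma dual_carrier_add: "\<alpha> (u + v) = \<alpha> u + \<alpha> v"
  using \<alpha> unfolding dual_carrier_def by blast

lemma dual_carrier_scale: "\<alpha> (scV c u) = c * \<alpha> u"
  using \<alpha> unfolding dual_carrier_def by blast

lemma dual_carrier_zero: "\<alpha> 0 = 0"
  using dual_carrier_add[of 0 0] by (metis add.right_neutral add_cancel_right_right)

lemma dual_carrier_minus: "\<alpha> (- u) = - \<alpha> u"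
  using dual_carrier_add[of u "- u"] dual_carrier_zero by (simp add: eq_neg_iff_add_eq_0 add.commute)

lemma dual_carrier_diff: "\<alpha> (u - v) = \<alpha> u - \<alpha> v"
  using dual_carrier_add[of u "- v"] dual_carrier_minus[of v] by simp

lemma dual_carrier_sum: "\<alpha> (\<Sum>g\<in>T. f g) = (\<Sum>g\<in>T. \<alpha> (f g))"
  using sum_comp_morphism[of \<alpha> f T] dual_carrier_zero dual_carrier_add by (simp add: o_def)

end

lemma zero_in_dual_carrier: "0 \<in> dual_carrier scV"
  unfolding dual_carrier_def by simp

lemma dual_carrier_add_mem: "\<alpha> \<in> dual_carrier scV \<Longrightarrow> \<beta> \<in> dual_carrier scV \<Longrightarrow> \<alpha> + \<beta> \<in> dual_carrier scV"
  unfolding dual_carrier_def by (simp add: algebra_simps)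

lemma dual_carrier_diff_mem: "\<alpha> \<in> dual_carrier scV \<Longrightarrow> \<beta> \<in> dual_carrier scV \<Longrightarrow> \<alpha> - \<beta> \<in> dual_carrier scV"
  unfolding dual_carrier_def by (simp add: algebra_simps)

lemma dual_carrier_scale_mem: "\<alpha> \<in> dual_carrier scV \<Longrightarrow> dual_scale c \<alpha> \<in> dual_carrier scV"
  unfolding dual_carrier_def dual_scale_def by (simp add: algebra_simps)

lemma dual_carrier_sum_mem:
  "(\<And>c. c \<in> T \<Longrightarrow> f c \<in> dual_carrier scV) \<Longrightarrow> (\<Sum>c\<in>T. f c) \<in> dual_carrier scV"
  by (induct T rule: infinite_finite_induct) (simp_all add: zero_in_dual_carrier dual_carrier_add_mem)

lemma dual_scale_add: "dual_scale e (f + g) = dual_scale e f + dual_scale e g"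
  by (simp add: dual_scale_def fun_eq_iff distrib_left)

lemma dual_scale_apply: "dual_scale e f v = e * f v"
  by (simp add: dual_scale_def)

lemma vector_space_dual_scale: "vector_space (dual_scale :: 'k::field \<Rightarrow> ('v \<Rightarrow> 'k) \<Rightarrow> ('v \<Rightarrow> 'k))"
  unfolding vector_space_def dual_scale_def by (simp add: fun_eq_iff algebra_simps)

lemma dual_grading_carrier: "\<alpha> \<in> dual_grading scV Vg c \<Longrightarrow> \<alpha> \<in> dual_carrier scV"
  unfolding dual_grading_def by blast

lemma dual_grading_vanish: "\<alpha> \<in> dual_grading scV Vg c \<Longrightarrow> v \<in> Vg b \<Longrightarrow> b \<noteq> - c \<Longrightarrow> \<alpha> v = 0"
  unfolding dual_grading_def by blast

definition dual_component :: "('g::ab_group_add \<Rightarrow> 'v::ab_group_add set) \<Rightarrow> ('v \<Rightarrow> 'k) \<Rightarrow> 'g \<Rightarrow> 'v \<Rightarrow> 'k"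
  where "dual_component Vg \<alpha> c = (\<lambda>v. \<alpha> (gcomp Vg v (- c)))"

context
  fixes scV :: "'k::field \<Rightarrow> 'v::ab_group_add \<Rightarrow> 'v" and Vg :: "'g::ab_group_add \<Rightarrow> 'v set"
  assumes graded: "graded_space scV UNIV Vg" and vs: "vector_space scV"
begin

lemma dual_component_mem:
  assumes \<alpha>: "\<alpha> \<in> dual_carrier scV"
  shows "dual_component Vg \<alpha> c \<in> dual_grading scV Vg c"
  using gcomp_add[OF graded] gcomp_scale[OF graded vs] gcomp_homogeneous[OF graded]
    dual_carrier_add[OF \<alpha>] dual_carrier_scale[OF \<alpha>] dual_carrier_zero[OF \<alpha>]
  by (simp add: dual_grading_def dual_carrier_def dual_component_def)

lemma dual_component_support:
  assumes \<alpha>: "\<alpha> \<in> dual_carrier scV"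
  shows "{c. dual_component Vg \<alpha> c \<noteq> 0} \<subseteq> uminus ` {g. \<exists>v\<in>Vg g. v \<noteq> 0}"
proof
  fix c assume "c \<in> {c. dual_component Vg \<alpha> c \<noteq> 0}"
  then obtain v where "\<alpha> (gcomp Vg v (- c)) \<noteq> 0" by (auto simp: dual_component_def fun_eq_iff)
  then have "gcomp Vg v (- c) \<noteq> 0" using dual_carrier_zero[OF \<alpha>] by auto
  moreover have "gcomp Vg v (- c) \<in> Vg (- c)" by (rule gcomp_mem[OF graded UNIV_I])
  ultimately have "- c \<in> {g. \<exists>v\<in>Vg g. v \<noteq> 0}" by blast
  then show "c \<in> uminus ` {g. \<exists>v\<in>Vg g. v \<noteq> 0}" by (rule image_eqI[rotated]) simp
qed

lemma dual_carrier_eq_sum_gcomp: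
  assumes \<alpha>: "\<alpha> \<in> dual_carrier scV"
  shows "\<alpha> v = (\<Sum>g\<in>grade_support Vg v. \<alpha> (gcomp Vg v g))"
proof -
  have "\<alpha> v = \<alpha> (\<Sum>g\<in>grade_support Vg v. gcomp Vg v g)"
    by (rule arg_cong[OF gcomp_sum_superset[OF graded UNIV_I finite_grade_support[OF graded UNIV_I] subset_refl]])
  then show ?thesis by (simp only: dual_carrier_sum[OF \<alpha>])
qed

lemma dual_component_sum:
  assumes \<alpha>: "\<alpha> \<in> dual_carrier scV" and "finite T"
    and T: "{c. dual_component Vg \<alpha> c \<noteq> 0} \<subseteq> T"
  shows "\<alpha> = (\<Sum>c\<in>T. dual_component Vg \<alpha> c)"
proof
  fix v
  let ?U = "T \<union> uminus ` grade_support Vg v"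
  have "finite ?U" using \<open>finite T\<close> finite_grade_support[OF graded UNIV_I] by blast
  have "\<alpha> v = (\<Sum>g\<in>grade_support Vg v. \<alpha> (gcomp Vg v g))"
    by (rule dual_carrier_eq_sum_gcomp[OF \<alpha>])
  also have "\<dots> = (\<Sum>c\<in>uminus ` grade_support Vg v. \<alpha> (gcomp Vg v (- c)))"
    by (simp add: sum.reindex inj_on_def o_def)
  also have "\<dots> = (\<Sum>c\<in>?U. \<alpha> (gcomp Vg v (- c)))"
  proof (rule sum.mono_neutral_left[OF \<open>finite ?U\<close>])
    have "gcomp Vg v (- c) = 0" if "c \<notin> uminus ` grade_support Vg v" for c
      using that image_eqI[of c uminus "- c"] by (auto simp: grade_support_def)
    then show "\<forall>c\<in>?U - uminus ` grade_support Vg v. \<alpha> (gcomp Vg v (- c)) = 0"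
      using dual_carrier_zero[OF \<alpha>] by auto
  qed auto
  also have "\<dots> = (\<Sum>c\<in>T. \<alpha> (gcomp Vg v (- c)))"
  proof (rule sum.mono_neutral_right[OF \<open>finite ?U\<close>])
    show "\<forall>c\<in>?U - T. \<alpha> (gcomp Vg v (- c)) = 0"
      using T by (auto simp: dual_component_def fun_eq_iff)
  qed auto
  finally show "\<alpha> v = (\<Sum>c\<in>T. dual_component Vg \<alpha> c) v"
    by (simp add: sum_apply dual_component_def)
qed

lemma hdec_dual_unique:
  assumes h: "hdec (dual_grading scV Vg) \<alpha> h"
  shows "h = dual_component Vg \<alpha>"
proof (intro ext)
  fix c v
  have "finite {c. h c \<noteq> 0}" and h_mem: "\<And>c. h c \<in> dual_grading scV Vg c"
    and \<alpha>_eq: "\<alpha> = (\<Sum>c\<in>{c. h c \<noteq> 0}. h c)" using h unfolding hdec_def by auto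
  have h_carrier: "h c \<in> dual_carrier scV" by (rule dual_grading_carrier[OF h_mem])
  let ?w = "gcomp Vg v (- c)"
  have w: "?w \<in> Vg (- c)" using gcomp_mem[OF graded] by simp
  have "\<alpha> ?w = (\<Sum>c'\<in>{c. h c \<noteq> 0}. if c' = c then h c ?w else 0)"
    unfolding \<alpha>_eq sum_apply
    by (rule sum.cong) (auto intro: dual_grading_vanish[OF h_mem w])
  also have "\<dots> = h c ?w" using \<open>finite {c. h c \<noteq> 0}\<close> by (auto simp: sum.delta)
  finally have \<alpha>_w: "\<alpha> ?w = h c ?w" .
  have "h c v = (\<Sum>g\<in>grade_support Vg v. h c (gcomp Vg v g))"
    by (rule dual_carrier_eq_sum_gcomp[OF h_carrier])
  also have "\<dots> = (\<Sum>g\<in>grade_support Vg v. if g = - c then h c ?w else 0)"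
    by (rule sum.cong) (auto intro: dual_grading_vanish[OF h_mem gcomp_mem[OF graded]])
  also have "\<dots> = h c ?w"
    using finite_grade_support[OF graded] dual_carrier_zero[OF h_carrier]
    by (auto simp: sum.delta grade_support_def)
  finally show "h c v = dual_component Vg \<alpha> c v" using \<alpha>_w by (simp add: dual_component_def)
qed

end

lemma graded_space_dual:
  assumes graded: "graded_space scV UNIV Vg" and vs: "vector_space scV" and fd: "fin_dim scV"
  shows "graded_space dual_scale (dual_carrier scV) (dual_grading scV Vg)"
  unfolding graded_space_def
proof (intro conjI allI ballI iffI)
  fix g
  show "dual_grading scV Vg g \<subseteq> dual_carrier scV" and "0 \<in> dual_grading scV Vg g"
    by (auto simp: dual_grading_def zero_in_dual_carrier)
  show "u + v \<in> dual_grading scV Vg g" "dual_scale c u \<in> dual_grading scV Vg g"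
    if "u \<in> dual_grading scV Vg g" "v \<in> dual_grading scV Vg g" for u v c
    using that dual_carrier_add_mem dual_carrier_scale_mem
    by (auto simp: dual_grading_def dual_scale_def)
next
  fix \<alpha>
  assume "\<exists>h. hdec (dual_grading scV Vg) \<alpha> h"
  then obtain h where "\<alpha> = (\<Sum>c\<in>{c. h c \<noteq> 0}. h c)" and "\<And>c. h c \<in> dual_grading scV Vg c"
    unfolding hdec_def by blast
  moreover have "h c \<in> dual_carrier scV" for c by (rule dual_grading_carrier) fact
  ultimately show "\<alpha> \<in> dual_carrier scV" by (simp add: dual_carrier_sum_mem)
next
  fix \<alpha> assume \<alpha>: "\<alpha> \<in> dual_carrier scV"
  have "finite {c. dual_component Vg \<alpha> c \<noteq> 0}"
    using dual_component_support[OF graded vs \<alpha>] finite_nonzero_degrees[OF graded vs fd]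
    by (blast intro: finite_subset)
  then have "hdec (dual_grading scV Vg) \<alpha> (dual_component Vg \<alpha>)"
    using dual_component_sum[OF graded vs \<alpha>] dual_component_mem[OF graded vs \<alpha>]
    unfolding hdec_def by blast
  then show "\<exists>h. hdec (dual_grading scV Vg) \<alpha> h" and "\<exists>!h. hdec (dual_grading scV Vg) \<alpha> h"
    using hdec_dual_unique[OF graded vs] by blast+
qed

section \<open>Dual operators\<close>

context
  fixes scA :: "'k::field \<Rightarrow> 'a::ab_group_add \<Rightarrow> 'a" and Ag :: "'g::ab_group_add \<Rightarrow> 'a set"
    and sc :: "'k \<Rightarrow> 'w::ab_group_add \<Rightarrow> 'w" and W :: "'w set" and Wg :: "'g \<Rightarrow> 'w set"
    and phi :: "'a \<Rightarrow> 'w \<Rightarrow> 'w"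
  assumes phi: "op_family scA Ag sc W Wg phi"
begin

lemma op_family_closed: "w \<in> W \<Longrightarrow> phi x w \<in> W"
  using phi unfolding op_family_def by blast

lemma op_family_add_vec: "u \<in> W \<Longrightarrow> v \<in> W \<Longrightarrow> phi x (u + v) = phi x u + phi x v"
  using phi unfolding op_family_def by blast

lemma op_family_scale_vec: "u \<in> W \<Longrightarrow> phi x (sc c u) = sc c (phi x u)"
  using phi unfolding op_family_def by blast

lemma op_family_add_alg: "w \<in> W \<Longrightarrow> phi (x + y) w = phi x w + phi y w"
  using phi unfolding op_family_def by blast

lemma op_family_scale_alg: "w \<in> W \<Longrightarrow> phi (scA c x) w = sc c (phi x w)"
  using phi unfolding op_family_def by blast

lemma op_family_degree: "x \<in> Ag b \<Longrightarrow> w \<in> Wg a \<Longrightarrow> phi x w \<in> Wg (a + b)"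
  using phi unfolding op_family_def by blast

lemma op_family_zero_alg: "w \<in> W \<Longrightarrow> phi 0 w = 0"
  using op_family_add_alg[of w 0 0] by simp

lemma op_family_neg_op:
  assumes graded: "graded_space sc W Wg" and vs: "vector_space sc"
  shows "op_family scA Ag sc W Wg (neg_op phi)"
proof -
  interpret vector_space sc by (fact vs)
  have "- phi x w \<in> W" if "w \<in> W" for x w
    using graded_space_scale_mem[OF graded vs op_family_closed[OF that], of "-1"] by simp
  moreover have "- phi x w \<in> Wg (a + b)" if "x \<in> Ag b" "w \<in> Wg a" for x w a b
    using graded_space_component_scale[OF graded op_family_degree[OF that], of "-1"] by simp
  ultimately show ?thesis
    unfolding op_family_def neg_op_def
    using op_family_add_vec op_family_scale_vec op_family_add_alg op_family_scale_alg by simp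
qed

end

lemma Rop_add_vec:
  assumes rho: "op_family scA Ag sc W Wg rho" and mu: "op_family scA Ag sc W Wg mu"
    and vs: "vector_space sc" and "u \<in> W" "v \<in> W"
  shows "Rop eps br sc rho mu a b x y (u + v) = Rop eps br sc rho mu a b x y u + Rop eps br sc rho mu a b x y v"
proof -
  interpret vector_space sc by (fact vs)
  show ?thesis
    unfolding Rop_def
    using assms op_family_add_vec[OF rho] op_family_add_vec[OF mu]
      op_family_closed[OF rho] op_family_closed[OF mu]
    by (simp add: scale_right_distrib algebra_simps)
qed

lemma Sop_add_vec:
  assumes rho: "op_family scA Ag sc W Wg rho" and mu: "op_family scA Ag sc W Wg mu"
    and vs: "vector_space sc" and "u \<in> W" "v \<in> W"
  shows "Sop eps mul sc rho mu a b x y (u + v) = Sop eps mul sc rho mu a b x y u + Sop eps mul sc rho mu a b x y v"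
proof -
  interpret vector_space sc by (fact vs)
  show ?thesis
    unfolding Sop_def
    using assms op_family_add_vec[OF rho] op_family_add_vec[OF mu]
      op_family_closed[OF rho] op_family_closed[OF mu]
    by (simp add: scale_right_distrib algebra_simps)
qed

locale graded_dual =
  fixes eps :: "'g::ab_group_add \<Rightarrow> 'g \<Rightarrow> 'k::field"
    and scA :: "'k \<Rightarrow> 'a::ab_group_add \<Rightarrow> 'a" and Ag :: "'g \<Rightarrow> 'a set"
    and scV :: "'k \<Rightarrow> 'v::ab_group_add \<Rightarrow> 'v" and Vg :: "'g \<Rightarrow> 'v set"
  assumes graded_A: "graded_space scA UNIV Ag" and vs_A: "vector_space scA"
    and graded_V: "graded_space scV UNIV Vg" and vs_V: "vector_space scV" and fin_dim_V: "fin_dim scV"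
begin

abbreviation "Vdual \<equiv> dual_carrier scV"
abbreviation "Vdual_deg \<equiv> dual_grading scV Vg"

lemma graded_Vdual: "graded_space dual_scale Vdual Vdual_deg"
  by (rule graded_space_dual[OF graded_V vs_V fin_dim_V])

lemma gcomp_Vdual_carrier: "\<alpha> \<in> Vdual \<Longrightarrow> gcomp Vdual_deg \<alpha> c \<in> Vdual"
  by (rule dual_grading_carrier[OF gcomp_mem[OF graded_Vdual]])

lemma dual_op_eq_sum_superset:
  assumes phi: "op_family scA Ag scV UNIV Vg phi" and \<alpha>: "\<alpha> \<in> Vdual"
    and "finite S" "grade_support Ag x \<subseteq> S" and "finite T" "grade_support Vdual_deg \<alpha> \<subseteq> T"
  shows "dual_op eps Ag scV Vg phi x \<alpha> v =
    - (\<Sum>a\<in>S. \<Sum>c\<in>T. eps a c * gcomp Vdual_deg \<alpha> c (phi (gcomp Ag x a) v))"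
proof -
  have inner: "(\<Sum>c\<in>grade_support Vdual_deg \<alpha>. eps a c * gcomp Vdual_deg \<alpha> c (phi (gcomp Ag x a) v))
      = (\<Sum>c\<in>T. eps a c * gcomp Vdual_deg \<alpha> c (phi (gcomp Ag x a) v))" for a
    by (rule sum.mono_neutral_left) (use assms in \<open>auto simp: grade_support_def\<close>)
  have "gcomp Vdual_deg \<alpha> c (phi 0 v) = 0" for c
    using op_family_zero_alg[OF phi] dual_carrier_zero[OF gcomp_Vdual_carrier[OF \<alpha>]] by simp
  then have outer: "(\<Sum>a\<in>grade_support Ag x. \<Sum>c\<in>T. eps a c * gcomp Vdual_deg \<alpha> c (phi (gcomp Ag x a) v))
      = (\<Sum>a\<in>S. \<Sum>c\<in>T. eps a c * gcomp Vdual_deg \<alpha> c (phi (gcomp Ag x a) v))"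
    by (intro sum.mono_neutral_left) (use assms in \<open>auto simp: grade_support_def\<close>)
  show ?thesis
    using inner outer by (simp add: dual_op_def grade_support_def)
qed

lemma dual_op_homogeneous:
  assumes phi: "op_family scA Ag scV UNIV Vg phi" and x: "x \<in> Ag a" and \<alpha>: "\<alpha> \<in> Vdual_deg c"
  shows "dual_op eps Ag scV Vg phi x \<alpha> = (\<lambda>v. - (eps a c * \<alpha> (phi x v)))"
proof
  fix v
  have "dual_op eps Ag scV Vg phi x \<alpha> v =
      - (\<Sum>a'\<in>{a}. \<Sum>c'\<in>{c}. eps a' c' * gcomp Vdual_deg \<alpha> c' (phi (gcomp Ag x a') v))"
    by (rule dual_op_eq_sum_superset[OF phi dual_grading_carrier[OF \<alpha>]])
      (simp_all add: grade_support_homogeneous[OF graded_A x] grade_support_homogeneous[OF graded_Vdual \<alpha>])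
  then show "dual_op eps Ag scV Vg phi x \<alpha> v = - (eps a c * \<alpha> (phi x v))"
    using gcomp_homogeneous[OF graded_A x] gcomp_homogeneous[OF graded_Vdual \<alpha>] by simp
qed

lemma op_family_dual_op:
  assumes phi: "op_family scA Ag scV UNIV Vg phi"
  shows "op_family scA Ag dual_scale Vdual Vdual_deg (dual_op eps Ag scV Vg phi)"
proof -
  let ?d = "dual_op eps Ag scV Vg phi"
  note expand = dual_op_eq_sum_superset[OF phi]
  note finite_A = finite_grade_support[OF graded_A UNIV_I]
  note finite_D = finite_grade_support[OF graded_Vdual]
  show ?thesis
    unfolding op_family_def
  proof (intro conjI allI ballI impI)
    fix x \<alpha> assume \<alpha>: "\<alpha> \<in> Vdual"
    note comp = gcomp_Vdual_carrier[OF \<alpha>]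
    show "?d x \<alpha> \<in> Vdual"
      unfolding dual_carrier_def
      using op_family_add_vec[OF phi] op_family_scale_vec[OF phi]
        dual_carrier_add[OF comp] dual_carrier_scale[OF comp]
      by (simp add: expand[OF \<alpha> finite_A subset_refl finite_D[OF \<alpha>] subset_refl]
          sum.distrib distrib_left sum_distrib_left mult.left_commute)
  next
    fix x u v assume u: "u \<in> Vdual" and v: "v \<in> Vdual"
    let ?T = "grade_support Vdual_deg u \<union> grade_support Vdual_deg v"
    have "finite ?T" using finite_D u v by simp
    note E = expand[OF _ finite_A subset_refl \<open>finite ?T\<close>]
    show "?d x (u + v) = ?d x u + ?d x v"
      using E[OF u] E[OF v] E[OF dual_carrier_add_mem[OF u v]] grade_support_add[OF graded_Vdual u v]
      by (simp add: fun_eq_iff gcomp_add[OF graded_Vdual u v] sum.distrib distrib_left)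
  next
    fix x k u assume u: "u \<in> Vdual"
    have "?d x (dual_scale k u) z = k * ?d x u z" for z
      using expand[OF u finite_A subset_refl finite_D[OF u] subset_refl]
        expand[OF dual_carrier_scale_mem[OF u] finite_A subset_refl finite_D[OF u]
          grade_support_scale[OF graded_Vdual vector_space_dual_scale u]]
      by (simp add: gcomp_scale[OF graded_Vdual vector_space_dual_scale u] dual_scale_apply
          sum_distrib_left mult.left_commute)
    then show "?d x (dual_scale k u) = dual_scale k (?d x u)" by (simp add: fun_eq_iff dual_scale_def)
  next
    fix x y \<alpha> assume \<alpha>: "\<alpha> \<in> Vdual"
    let ?S = "grade_support Ag x \<union> grade_support Ag y"
    have "finite ?S" using finite_A by simp
    note E = expand[OF \<alpha> \<open>finite ?S\<close> _ finite_D[OF \<alpha>] subset_refl]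
    show "?d (x + y) \<alpha> = ?d x \<alpha> + ?d y \<alpha>"
      using E[of x] E[of y] E[OF grade_support_add[OF graded_A UNIV_I UNIV_I, of x y]]
        op_family_add_alg[OF phi] dual_carrier_add[OF gcomp_Vdual_carrier[OF \<alpha>]]
      by (simp add: fun_eq_iff gcomp_add[OF graded_A UNIV_I UNIV_I] sum.distrib distrib_left)
  next
    fix k x \<alpha> assume \<alpha>: "\<alpha> \<in> Vdual"
    note E = expand[OF \<alpha> finite_A[of x] _ finite_D[OF \<alpha>] subset_refl]
    show "?d (scA k x) \<alpha> = dual_scale k (?d x \<alpha>)"
      using E[OF subset_refl] E[OF grade_support_scale[OF graded_A vs_A UNIV_I, of k x]]
        op_family_scale_alg[OF phi] dual_carrier_scale[OF gcomp_Vdual_carrier[OF \<alpha>]]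
      by (simp add: fun_eq_iff dual_scale_def gcomp_scale[OF graded_A vs_A UNIV_I]
          sum_distrib_left mult.left_commute)
  next
    fix a b x \<alpha> assume x: "x \<in> Ag b" and \<alpha>: "\<alpha> \<in> Vdual_deg a"
    have "\<alpha> (phi x v) = 0" if "v \<in> Vg e" "e \<noteq> - (a + b)" for v e
      using dual_grading_vanish[OF \<alpha> op_family_degree[OF phi x that(1)]] that(2)
      by (simp add: algebra_simps)
    then show "?d x \<alpha> \<in> Vdual_deg (a + b)"
      using op_family_add_vec[OF phi] op_family_scale_vec[OF phi]
        dual_carrier_add[OF dual_grading_carrier[OF \<alpha>]] dual_carrier_scale[OF dual_grading_carrier[OF \<alpha>]]
      by (simp add: dual_op_homogeneous[OF phi x \<alpha>] dual_grading_def dual_carrier_def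
          distrib_left mult.left_commute)
  qed
qed

end

section \<open>The dual of a representation of an F-manifold color algebra\<close>

locale dual_F_manifold_rep = graded_dual eps scA Ag scV Vg
  for eps :: "'g::ab_group_add \<Rightarrow> 'g \<Rightarrow> 'k::field"
    and scA :: "'k \<Rightarrow> 'a::ab_group_add \<Rightarrow> 'a" and Ag :: "'g \<Rightarrow> 'a set"
    and scV :: "'k \<Rightarrow> 'v::ab_group_add \<Rightarrow> 'v" and Vg :: "'g \<Rightarrow> 'v set" +
  fixes mul :: "'a \<Rightarrow> 'a \<Rightarrow> 'a" and br :: "'a \<Rightarrow> 'a \<Rightarrow> 'a"
    and rho :: "'a \<Rightarrow> 'v \<Rightarrow> 'v" and mu :: "'a \<Rightarrow> 'v \<Rightarrow> 'v"
  assumes skew: "skew_bichar eps"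
    and F_manifold: "F_manifold_color eps scA Ag mul br"
    and lie_rep_rho: "lie_rep eps scA Ag br scV UNIV Vg rho"
    and assoc_rep_mu: "assoc_rep scA Ag mul scV UNIV Vg mu"
    and Rop_mul: "\<And>a b c x y z v. x \<in> Ag a \<Longrightarrow> y \<in> Ag b \<Longrightarrow> z \<in> Ag c \<Longrightarrow>
          Rop eps br scV rho mu (a + b) c (mul x y) z v
          = scV (eps a (b + c)) (Rop eps br scV rho mu b c y z (mu x v))
            + scV (eps b c) (Rop eps br scV rho mu a c x z (mu y v))"
    and mu_Pop: "\<And>a b c x y z v. x \<in> Ag a \<Longrightarrow> y \<in> Ag b \<Longrightarrow> z \<in> Ag c \<Longrightarrow>
          mu (Pop eps scA mul br a b x y z) v
          = - scV (eps a (b + c)) (Top eps mul scV rho mu b c y z (mu x v))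
            + mu x (Top eps mul scV rho mu b c y z v)"
begin

lemma eps_add_right: "eps a (b + c) = eps a b * eps a c"
  using skew unfolding skew_bichar_def by blast

lemma eps_add_left: "eps (a + b) c = eps a c * eps b c"
  using skew unfolding skew_bichar_def by blast

lemma eps_skew: "eps a b * eps b a = 1"
  using skew unfolding skew_bichar_def by blast

lemma op_family_rho: "op_family scA Ag scV UNIV Vg rho"
  using lie_rep_rho unfolding lie_rep_def by blast

lemma op_family_mu: "op_family scA Ag scV UNIV Vg mu"
  using assoc_rep_mu unfolding assoc_rep_def by blast

lemma rho_br:
  "x \<in> Ag a \<Longrightarrow> y \<in> Ag b \<Longrightarrow> rho (br x y) v = rho x (rho y v) - scV (eps a b) (rho y (rho x v))"
  using lie_rep_rho unfolding lie_rep_def by blast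

lemma mu_mul: "mu (mul x y) v = mu x (mu y v)"
  using assoc_rep_mu unfolding assoc_rep_def by blast

lemma mul_degree: "x \<in> Ag a \<Longrightarrow> y \<in> Ag b \<Longrightarrow> mul x y \<in> Ag (a + b)"
  using F_manifold unfolding F_manifold_color_def eps_comm_assoc_def graded_op_def by blast

lemma br_degree: "x \<in> Ag a \<Longrightarrow> y \<in> Ag b \<Longrightarrow> br x y \<in> Ag (a + b)"
  using F_manifold unfolding F_manifold_color_def lie_color_def graded_op_def by blast

lemma mul_eps_comm: "x \<in> Ag a \<Longrightarrow> y \<in> Ag b \<Longrightarrow> mul x y = scA (eps a b) (mul y x)"
  using F_manifold unfolding F_manifold_color_def eps_comm_assoc_def by blast

lemma bilinear_mul: "bilinear_op scA mul"
  using F_manifold unfolding F_manifold_color_def eps_comm_assoc_def by blast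

lemma mul_add_left: "mul (x + y) z = mul x z + mul y z"
  using bilinear_mul unfolding bilinear_op_def by simp

lemma mul_add_right: "mul z (x + y) = mul z x + mul z y"
  using bilinear_mul unfolding bilinear_op_def by simp

lemma Pop_degree:
  assumes x: "x \<in> Ag a" and y: "y \<in> Ag b" and z: "z \<in> Ag c"
  shows "Pop eps scA mul br a b x y z \<in> Ag (a + b + c)"
proof -
  have "br x (mul y z) \<in> Ag (a + b + c)"
    using br_degree[OF x mul_degree[OF y z]] by (simp add: add.assoc)
  moreover have "mul (br x y) z \<in> Ag (a + b + c)"
    by (rule mul_degree[OF br_degree[OF x y] z])
  moreover have "scA (eps a b) (mul y (br x z)) \<in> Ag (a + b + c)"
    using graded_space_component_scale[OF graded_A mul_degree[OF y br_degree[OF x z]]]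
    by (simp add: add_ac)
  ultimately show ?thesis
    unfolding Pop_def by (intro graded_space_component_diff[OF graded_A vs_A])
qed

abbreviation "rho_dual \<equiv> dual_op eps Ag scV Vg rho"
abbreviation "neg_mu_dual \<equiv> neg_op (dual_op eps Ag scV Vg mu)"

lemma op_family_rho_dual: "op_family scA Ag dual_scale Vdual Vdual_deg rho_dual"
  by (rule op_family_dual_op[OF op_family_rho])

lemma op_family_neg_mu_dual: "op_family scA Ag dual_scale Vdual Vdual_deg neg_mu_dual"
  by (rule op_family_neg_op[OF op_family_dual_op[OF op_family_mu] graded_Vdual vector_space_dual_scale])

lemma rho_dual_homogeneous:
  "x \<in> Ag a \<Longrightarrow> \<alpha> \<in> Vdual_deg c \<Longrightarrow> rho_dual x \<alpha> = (\<lambda>v. - (eps a c * \<alpha> (rho x v)))"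
  by (rule dual_op_homogeneous[OF op_family_rho])

lemma neg_mu_dual_homogeneous:
  "x \<in> Ag a \<Longrightarrow> \<alpha> \<in> Vdual_deg c \<Longrightarrow> neg_mu_dual x \<alpha> = (\<lambda>v. eps a c * \<alpha> (mu x v))"
  by (simp add: neg_op_def fun_eq_iff dual_op_homogeneous[OF op_family_mu])

lemmas rho_dual_closed = op_family_closed[OF op_family_rho_dual]
lemmas neg_mu_dual_closed = op_family_closed[OF op_family_neg_mu_dual]
lemmas rho_dual_degree = op_family_degree[OF op_family_rho_dual]
lemmas neg_mu_dual_degree = op_family_degree[OF op_family_neg_mu_dual]

lemma Vdual_deg_diff: "\<alpha> \<in> Vdual_deg g \<Longrightarrow> \<beta> \<in> Vdual_deg g \<Longrightarrow> \<alpha> - \<beta> \<in> Vdual_deg g"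
  by (rule graded_space_component_diff[OF graded_Vdual vector_space_dual_scale])

lemma lie_rep_rho_dual: "lie_rep eps scA Ag br dual_scale Vdual Vdual_deg rho_dual"
  unfolding lie_rep_def
proof (intro conjI op_family_rho_dual allI impI ballI)
  fix a b x y \<alpha> assume x: "x \<in> Ag a" and y: "y \<in> Ag b" and \<alpha>: "\<alpha> \<in> Vdual"
  show "rho_dual (br x y) \<alpha> = rho_dual x (rho_dual y \<alpha>) - dual_scale (eps a b) (rho_dual y (rho_dual x \<alpha>))"
  proof (rule graded_space_additive_eqI[OF graded_Vdual, where F = "rho_dual (br x y)"
        and G = "\<lambda>\<alpha>. rho_dual x (rho_dual y \<alpha>) - dual_scale (eps a b) (rho_dual y (rho_dual x \<alpha>))", OF _ _ _ \<alpha>])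
    fix u v assume "u \<in> Vdual" "v \<in> Vdual"
    then show "rho_dual (br x y) (u + v) = rho_dual (br x y) u + rho_dual (br x y) v"
      and "rho_dual x (rho_dual y (u + v)) - dual_scale (eps a b) (rho_dual y (rho_dual x (u + v))) =
        (rho_dual x (rho_dual y u) - dual_scale (eps a b) (rho_dual y (rho_dual x u))) +
        (rho_dual x (rho_dual y v) - dual_scale (eps a b) (rho_dual y (rho_dual x v)))"
      by (simp_all add: op_family_add_vec[OF op_family_rho_dual] rho_dual_closed dual_scale_add)
  next
    fix c \<alpha> assume \<alpha>: "\<alpha> \<in> Vdual_deg c"
    note \<alpha>_lin = dual_carrier_diff[OF dual_grading_carrier[OF \<alpha>]] dual_carrier_scale[OF dual_grading_carrier[OF \<alpha>]]
    show "rho_dual (br x y) \<alpha> = rho_dual x (rho_dual y \<alpha>) - dual_scale (eps a b) (rho_dual y (rho_dual x \<alpha>))"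
      unfolding rho_dual_homogeneous[OF br_degree[OF x y] \<alpha>] rho_dual_homogeneous[OF x rho_dual_degree[OF y \<alpha>]]
        rho_dual_homogeneous[OF y rho_dual_degree[OF x \<alpha>]]
    proof
      fix v
      show "- (eps (a + b) c * \<alpha> (rho (br x y) v)) =
        ((\<lambda>v. - (eps a (c + b) * rho_dual y \<alpha> (rho x v)))
          - dual_scale (eps a b) (\<lambda>v. - (eps b (c + a) * rho_dual x \<alpha> (rho y v)))) v"
        unfolding rho_dual_homogeneous[OF x \<alpha>] rho_dual_homogeneous[OF y \<alpha>]
          rho_br[OF x y] minus_apply dual_scale_apply \<alpha>_lin eps_add_right eps_add_left
        using eps_skew[of a b] by algebra
    qed
  qed
qed


lemma neg_mu_dual_mul_homogeneous:
  assumes x: "x \<in> Ag a" and y: "y \<in> Ag b" and \<alpha>: "\<alpha> \<in> Vdual_deg c"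
  shows "neg_mu_dual (mul x y) \<alpha> = neg_mu_dual x (neg_mu_dual y \<alpha>)"
proof -
  \<comment> \<open>Transposition reverses the order of \<open>\<mu>(x)\<mu>(y)\<close>; \<open>\<epsilon>\<close>-commutativity of the product restores it.\<close>
  have mu_mul_swap: "mu (mul x y) v = scV (eps a b) (mu y (mu x v))" for v
    unfolding mul_eps_comm[OF x y] op_family_scale_alg[OF op_family_mu UNIV_I] mu_mul ..
  show ?thesis
    unfolding neg_mu_dual_homogeneous[OF mul_degree[OF x y] \<alpha>]
      neg_mu_dual_homogeneous[OF x neg_mu_dual_degree[OF y \<alpha>]]
  proof
    fix v
    show "eps (a + b) c * \<alpha> (mu (mul x y) v) = eps a (c + b) * neg_mu_dual y \<alpha> (mu x v)"
      unfolding neg_mu_dual_homogeneous[OF y \<alpha>] mu_mul_swap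
        dual_carrier_scale[OF dual_grading_carrier[OF \<alpha>]] eps_add_right eps_add_left
      by (simp add: mult_ac)
  qed
qed

lemma assoc_rep_neg_mu_dual: "assoc_rep scA Ag mul dual_scale Vdual Vdual_deg neg_mu_dual"
  unfolding assoc_rep_def
proof (intro conjI op_family_neg_mu_dual allI ballI)
  note add_vec = op_family_add_vec[OF op_family_neg_mu_dual]
  note add_alg = op_family_add_alg[OF op_family_neg_mu_dual]
  have homogeneous_xy: "neg_mu_dual (mul x y) \<alpha> = neg_mu_dual x (neg_mu_dual y \<alpha>)"
    if x: "x \<in> Ag a" and y: "y \<in> Ag b" and \<alpha>: "\<alpha> \<in> Vdual" for x y \<alpha> a b
    by (rule graded_space_additive_eqI[OF graded_Vdual, where F = "neg_mu_dual (mul x y)"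
          and G = "\<lambda>\<alpha>. neg_mu_dual x (neg_mu_dual y \<alpha>)", OF _ _ _ \<alpha>])
      (simp_all add: add_vec neg_mu_dual_closed neg_mu_dual_mul_homogeneous[OF x y])
  have homogeneous_x: "neg_mu_dual (mul x y) \<alpha> = neg_mu_dual x (neg_mu_dual y \<alpha>)"
    if x: "x \<in> Ag a" and \<alpha>: "\<alpha> \<in> Vdual" for x y \<alpha> a
    by (rule graded_space_additive_eqI[OF graded_A, where F = "\<lambda>y. neg_mu_dual (mul x y) \<alpha>"
          and G = "\<lambda>y. neg_mu_dual x (neg_mu_dual y \<alpha>)", OF _ _ _ UNIV_I])
      (simp_all add: mul_add_right add_alg add_vec neg_mu_dual_closed \<alpha> homogeneous_xy[OF x _ \<alpha>])
  fix x y \<alpha> assume \<alpha>: "\<alpha> \<in> Vdual"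
  show "neg_mu_dual (mul x y) \<alpha> = neg_mu_dual x (neg_mu_dual y \<alpha>)"
    by (rule graded_space_additive_eqI[OF graded_A, where F = "\<lambda>x. neg_mu_dual (mul x y) \<alpha>"
          and G = "\<lambda>x. neg_mu_dual x (neg_mu_dual y \<alpha>)", OF _ _ _ UNIV_I])
      (simp_all add: mul_add_left add_alg neg_mu_dual_closed \<alpha> homogeneous_x)
qed

abbreviation "R_dual \<equiv> Rop eps br dual_scale rho_dual neg_mu_dual"
abbreviation "S_dual \<equiv> Sop eps mul dual_scale rho_dual neg_mu_dual"

lemma R_dual_homogeneous:
  assumes x: "x \<in> Ag a" and y: "y \<in> Ag b" and \<alpha>: "\<alpha> \<in> Vdual_deg d"
  shows "R_dual a b x y \<alpha> = (\<lambda>v. eps (a + b) d * \<alpha> (Rop eps br scV rho mu a b x y v))"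
  unfolding Rop_def[of eps br dual_scale] rho_dual_homogeneous[OF x neg_mu_dual_degree[OF y \<alpha>]]
    neg_mu_dual_homogeneous[OF y rho_dual_degree[OF x \<alpha>]] neg_mu_dual_homogeneous[OF br_degree[OF x y] \<alpha>]
proof
  fix v
  show "((\<lambda>v. - (eps a (d + b) * neg_mu_dual y \<alpha> (rho x v)))
      - dual_scale (eps a b) (\<lambda>v. eps b (d + a) * rho_dual x \<alpha> (mu y v))
      - (\<lambda>v. eps (a + b) d * \<alpha> (mu (br x y) v))) v
    = eps (a + b) d * \<alpha> (Rop eps br scV rho mu a b x y v)"
    unfolding neg_mu_dual_homogeneous[OF y \<alpha>] rho_dual_homogeneous[OF x \<alpha>] Rop_def minus_apply
      dual_scale_apply dual_carrier_diff[OF dual_grading_carrier[OF \<alpha>]]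
      dual_carrier_scale[OF dual_grading_carrier[OF \<alpha>]] eps_add_right eps_add_left
    using eps_skew[of a b] by algebra
qed

lemma S_dual_homogeneous:
  assumes x: "x \<in> Ag a" and y: "y \<in> Ag b" and \<alpha>: "\<alpha> \<in> Vdual_deg d"
  shows "S_dual a b x y \<alpha> = (\<lambda>v. eps (a + b) d * \<alpha> (Top eps mul scV rho mu a b x y v))"
  unfolding Sop_def[of eps mul dual_scale] neg_mu_dual_homogeneous[OF x rho_dual_degree[OF y \<alpha>]]
    neg_mu_dual_homogeneous[OF y rho_dual_degree[OF x \<alpha>]] rho_dual_homogeneous[OF mul_degree[OF x y] \<alpha>]
proof
  fix v
  note \<alpha>_lin = dual_carrier_diff dual_carrier_add dual_carrier_minus dual_carrier_scale
  show "((\<lambda>v. eps a (d + b) * rho_dual y \<alpha> (mu x v))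
      + dual_scale (eps a b) (\<lambda>v. eps b (d + a) * rho_dual x \<alpha> (mu y v))
      - (\<lambda>v. - (eps (a + b) d * \<alpha> (rho (mul x y) v)))) v
    = eps (a + b) d * \<alpha> (Top eps mul scV rho mu a b x y v)"
    unfolding rho_dual_homogeneous[OF y \<alpha>] rho_dual_homogeneous[OF x \<alpha>] Top_def minus_apply plus_fun_apply
      dual_scale_apply \<alpha>_lin[OF dual_grading_carrier[OF \<alpha>]] eps_add_right eps_add_left
    using eps_skew[of a b] by algebra
qed

lemma R_dual_degree:
  assumes x: "x \<in> Ag a" and y: "y \<in> Ag b" and \<alpha>: "\<alpha> \<in> Vdual_deg d"
  shows "R_dual a b x y \<alpha> \<in> Vdual_deg (d + (a + b))"
  unfolding Rop_def
  using rho_dual_degree[OF x neg_mu_dual_degree[OF y \<alpha>]]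
    graded_space_component_scale[OF graded_Vdual neg_mu_dual_degree[OF y rho_dual_degree[OF x \<alpha>]]]
    neg_mu_dual_degree[OF br_degree[OF x y] \<alpha>]
  by (intro Vdual_deg_diff) (simp_all add: add_ac)

lemma S_dual_degree:
  assumes x: "x \<in> Ag a" and y: "y \<in> Ag b" and \<alpha>: "\<alpha> \<in> Vdual_deg d"
  shows "S_dual a b x y \<alpha> \<in> Vdual_deg (d + (a + b))"
  unfolding Sop_def
  using neg_mu_dual_degree[OF x rho_dual_degree[OF y \<alpha>]]
    graded_space_component_scale[OF graded_Vdual neg_mu_dual_degree[OF y rho_dual_degree[OF x \<alpha>]]]
    rho_dual_degree[OF mul_degree[OF x y] \<alpha>]
  by (intro Vdual_deg_diff graded_space_component_add[OF graded_Vdual]) (simp_all add: add_ac)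

lemma R_dual_closed: "\<alpha> \<in> Vdual \<Longrightarrow> R_dual a b x y \<alpha> \<in> Vdual"
  unfolding Rop_def by (intro dual_carrier_diff_mem rho_dual_closed neg_mu_dual_closed dual_carrier_scale_mem)

lemma S_dual_closed: "\<alpha> \<in> Vdual \<Longrightarrow> S_dual a b x y \<alpha> \<in> Vdual"
  unfolding Sop_def by (intro dual_carrier_diff_mem dual_carrier_add_mem rho_dual_closed neg_mu_dual_closed
      dual_carrier_scale_mem)

lemma R_dual_add: "u \<in> Vdual \<Longrightarrow> v \<in> Vdual \<Longrightarrow> R_dual a b x y (u + v) = R_dual a b x y u + R_dual a b x y v"
  by (rule Rop_add_vec[OF op_family_rho_dual op_family_neg_mu_dual vector_space_dual_scale])

lemma S_dual_add: "u \<in> Vdual \<Longrightarrow> v \<in> Vdual \<Longrightarrow> S_dual a b x y (u + v) = S_dual a b x y u + S_dual a b x y v"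
  by (rule Sop_add_vec[OF op_family_rho_dual op_family_neg_mu_dual vector_space_dual_scale])

lemma R_dual_mul:
  assumes x1: "x1 \<in> Ag a1" and x2: "x2 \<in> Ag a2" and x3: "x3 \<in> Ag a3" and \<alpha>: "\<alpha> \<in> Vdual"
  shows "R_dual (a1 + a2) a3 (mul x1 x2) x3 \<alpha>
    = neg_mu_dual x1 (R_dual a2 a3 x2 x3 \<alpha>) + dual_scale (eps a1 a2) (neg_mu_dual x2 (R_dual a1 a3 x1 x3 \<alpha>))"
proof (rule graded_space_additive_eqI[OF graded_Vdual, where F = "R_dual (a1 + a2) a3 (mul x1 x2) x3"
      and G = "\<lambda>\<alpha>. neg_mu_dual x1 (R_dual a2 a3 x2 x3 \<alpha>)
                + dual_scale (eps a1 a2) (neg_mu_dual x2 (R_dual a1 a3 x1 x3 \<alpha>))", OF _ _ _ \<alpha>])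
  fix u v assume "u \<in> Vdual" "v \<in> Vdual"
  then show "R_dual (a1 + a2) a3 (mul x1 x2) x3 (u + v)
      = R_dual (a1 + a2) a3 (mul x1 x2) x3 u + R_dual (a1 + a2) a3 (mul x1 x2) x3 v"
    and "neg_mu_dual x1 (R_dual a2 a3 x2 x3 (u + v))
        + dual_scale (eps a1 a2) (neg_mu_dual x2 (R_dual a1 a3 x1 x3 (u + v)))
      = (neg_mu_dual x1 (R_dual a2 a3 x2 x3 u) + dual_scale (eps a1 a2) (neg_mu_dual x2 (R_dual a1 a3 x1 x3 u)))
        + (neg_mu_dual x1 (R_dual a2 a3 x2 x3 v) + dual_scale (eps a1 a2) (neg_mu_dual x2 (R_dual a1 a3 x1 x3 v)))"
    by (simp_all add: R_dual_add op_family_add_vec[OF op_family_neg_mu_dual] R_dual_closed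
        dual_scale_add algebra_simps)
next
  fix d \<alpha> assume \<alpha>: "\<alpha> \<in> Vdual_deg d"
  show "R_dual (a1 + a2) a3 (mul x1 x2) x3 \<alpha>
    = neg_mu_dual x1 (R_dual a2 a3 x2 x3 \<alpha>) + dual_scale (eps a1 a2) (neg_mu_dual x2 (R_dual a1 a3 x1 x3 \<alpha>))"
    unfolding R_dual_homogeneous[OF mul_degree[OF x1 x2] x3 \<alpha>]
      neg_mu_dual_homogeneous[OF x1 R_dual_degree[OF x2 x3 \<alpha>]]
      neg_mu_dual_homogeneous[OF x2 R_dual_degree[OF x1 x3 \<alpha>]]
  proof
    fix v
    show "eps (a1 + a2 + a3) d * \<alpha> (Rop eps br scV rho mu (a1 + a2) a3 (mul x1 x2) x3 v)
      = ((\<lambda>v. eps a1 (d + (a2 + a3)) * R_dual a2 a3 x2 x3 \<alpha> (mu x1 v))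
        + dual_scale (eps a1 a2) (\<lambda>v. eps a2 (d + (a1 + a3)) * R_dual a1 a3 x1 x3 \<alpha> (mu x2 v))) v"
      unfolding R_dual_homogeneous[OF x2 x3 \<alpha>] R_dual_homogeneous[OF x1 x3 \<alpha>] Rop_mul[OF x1 x2 x3]
        plus_fun_apply dual_scale_apply dual_carrier_add[OF dual_grading_carrier[OF \<alpha>]]
        dual_carrier_scale[OF dual_grading_carrier[OF \<alpha>]] eps_add_right eps_add_left
      using eps_skew[of a1 a2] eps_skew[of a1 a3] eps_skew[of a2 a3] by algebra
  qed
qed

lemma neg_mu_dual_Pop:
  assumes x1: "x1 \<in> Ag a1" and x2: "x2 \<in> Ag a2" and x3: "x3 \<in> Ag a3" and \<alpha>: "\<alpha> \<in> Vdual"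
  shows "neg_mu_dual (Pop eps scA mul br a1 a2 x1 x2 x3) \<alpha>
    = dual_scale (eps a1 (a2 + a3)) (S_dual a2 a3 x2 x3 (neg_mu_dual x1 \<alpha>)) - neg_mu_dual x1 (S_dual a2 a3 x2 x3 \<alpha>)"
proof (rule graded_space_additive_eqI[OF graded_Vdual, where F = "neg_mu_dual (Pop eps scA mul br a1 a2 x1 x2 x3)"
      and G = "\<lambda>\<alpha>. dual_scale (eps a1 (a2 + a3)) (S_dual a2 a3 x2 x3 (neg_mu_dual x1 \<alpha>))
                - neg_mu_dual x1 (S_dual a2 a3 x2 x3 \<alpha>)", OF _ _ _ \<alpha>])
  fix u v assume "u \<in> Vdual" "v \<in> Vdual"
  then show "neg_mu_dual (Pop eps scA mul br a1 a2 x1 x2 x3) (u + v)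
      = neg_mu_dual (Pop eps scA mul br a1 a2 x1 x2 x3) u + neg_mu_dual (Pop eps scA mul br a1 a2 x1 x2 x3) v"
    and "dual_scale (eps a1 (a2 + a3)) (S_dual a2 a3 x2 x3 (neg_mu_dual x1 (u + v)))
        - neg_mu_dual x1 (S_dual a2 a3 x2 x3 (u + v))
      = (dual_scale (eps a1 (a2 + a3)) (S_dual a2 a3 x2 x3 (neg_mu_dual x1 u)) - neg_mu_dual x1 (S_dual a2 a3 x2 x3 u))
        + (dual_scale (eps a1 (a2 + a3)) (S_dual a2 a3 x2 x3 (neg_mu_dual x1 v)) - neg_mu_dual x1 (S_dual a2 a3 x2 x3 v))"
    by (simp_all add: S_dual_add op_family_add_vec[OF op_family_neg_mu_dual] S_dual_closed neg_mu_dual_closed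
        dual_scale_add algebra_simps)
next
  fix d \<alpha> assume \<alpha>: "\<alpha> \<in> Vdual_deg d"
  show "neg_mu_dual (Pop eps scA mul br a1 a2 x1 x2 x3) \<alpha>
    = dual_scale (eps a1 (a2 + a3)) (S_dual a2 a3 x2 x3 (neg_mu_dual x1 \<alpha>)) - neg_mu_dual x1 (S_dual a2 a3 x2 x3 \<alpha>)"
    unfolding neg_mu_dual_homogeneous[OF Pop_degree[OF x1 x2 x3] \<alpha>]
      S_dual_homogeneous[OF x2 x3 neg_mu_dual_degree[OF x1 \<alpha>]]
      neg_mu_dual_homogeneous[OF x1 S_dual_degree[OF x2 x3 \<alpha>]]
  proof
    fix v
    show "eps (a1 + a2 + a3) d * \<alpha> (mu (Pop eps scA mul br a1 a2 x1 x2 x3) v)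
      = (dual_scale (eps a1 (a2 + a3)) (\<lambda>v. eps (a2 + a3) (d + a1) * neg_mu_dual x1 \<alpha> (Top eps mul scV rho mu a2 a3 x2 x3 v))
        - (\<lambda>v. eps a1 (d + (a2 + a3)) * S_dual a2 a3 x2 x3 \<alpha> (mu x1 v))) v"
      unfolding neg_mu_dual_homogeneous[OF x1 \<alpha>] S_dual_homogeneous[OF x2 x3 \<alpha>] mu_Pop[OF x1 x2 x3]
        minus_apply dual_scale_apply dual_carrier_add[OF dual_grading_carrier[OF \<alpha>]]
        dual_carrier_minus[OF dual_grading_carrier[OF \<alpha>]] dual_carrier_scale[OF dual_grading_carrier[OF \<alpha>]]
        eps_add_right eps_add_left
      using eps_skew[of a1 a2] eps_skew[of a1 a3] eps_skew[of a2 a3] by algebra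
  qed
qed

lemma F_manifold_rep_dual:
  "F_manifold_rep eps scA Ag mul br dual_scale Vdual Vdual_deg rho_dual neg_mu_dual"
  unfolding F_manifold_rep_def
  using lie_rep_rho_dual assoc_rep_neg_mu_dual R_dual_mul neg_mu_dual_Pop by blast

end

theorem proposition3p6:
  fixes eps :: "'g::ab_group_add \<Rightarrow> 'g \<Rightarrow> 'k::field_char_0"
    and scA :: "'k \<Rightarrow> 'a::ab_group_add \<Rightarrow> 'a" and Ag :: "'g \<Rightarrow> 'a set"
    and mul :: "'a \<Rightarrow> 'a \<Rightarrow> 'a" and br :: "'a \<Rightarrow> 'a \<Rightarrow> 'a"
    and scV :: "'k \<Rightarrow> 'v::ab_group_add \<Rightarrow> 'v" and Vg :: "'g \<Rightarrow> 'v set"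
    and rho :: "'a \<Rightarrow> 'v \<Rightarrow> 'v" and mu :: "'a \<Rightarrow> 'v \<Rightarrow> 'v"
  assumes "alg_closed_field TYPE('k)"
    and "skew_bichar eps"
    and "vector_space scA" and "fin_dim scA" and "graded_space scA UNIV Ag"
    and "vector_space scV" and "fin_dim scV" and "graded_space scV UNIV Vg"
    and "F_manifold_color eps scA Ag mul br"
    and "lie_rep eps scA Ag br scV UNIV Vg rho"
    and "assoc_rep scA Ag mul scV UNIV Vg mu"
    and "\<And>a b c x y z v. x \<in> Ag a \<Longrightarrow> y \<in> Ag b \<Longrightarrow> z \<in> Ag c \<Longrightarrow>
          Rop eps br scV rho mu (a + b) c (mul x y) z v
          = scV (eps a (b + c)) (Rop eps br scV rho mu b c y z (mu x v))
            + scV (eps b c) (Rop eps br scV rho mu a c x z (mu y v))"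
    and "\<And>a b c x y z v. x \<in> Ag a \<Longrightarrow> y \<in> Ag b \<Longrightarrow> z \<in> Ag c \<Longrightarrow>
          mu (Pop eps scA mul br a b x y z) v
          = - scV (eps a (b + c)) (Top eps mul scV rho mu b c y z (mu x v))
            + mu x (Top eps mul scV rho mu b c y z v)"
  shows "graded_space dual_scale (dual_carrier scV) (dual_grading scV Vg) \<and>
         F_manifold_rep eps scA Ag mul br dual_scale (dual_carrier scV) (dual_grading scV Vg)
           (dual_op eps Ag scV Vg rho) (neg_op (dual_op eps Ag scV Vg mu))"
proof -
  interpret dual_F_manifold_rep eps scA Ag scV Vg mul br rho mu
    by (intro dual_F_manifold_rep.intro graded_dual.intro dual_F_manifold_rep_axioms.intro) (fact assms)+
  show ?thesis using graded_Vdual F_manifold_rep_dual by blast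
qed

end
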